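(* Let $G$ be a group with a right-invariant metric $d$, and suppose there is a group $\tilde G\supseteq G$ (with $G$ a subgroup) carrying a right-invariant metric $\tilde d$ with $\tilde d|_G=d$, such that $(\tilde G,\tilde d)$ is voidless. Then for every closed ball $B\subset G$ and every $\sigma\in G$, $B\,\triangle\,\sigma B\subseteq\partial_tB$, where $t=d(\sigma,e)$.
   Context: Closed balls in $G$: $B_r(x)=\{y\in G:d(x,y)\le r\}$; $\tilde B_r(x)$, $\partial\tilde B_r(x)=\{y\in\tilde G:\tilde d(x,y)=r\}$ are the corresponding ball and sphere in $\tilde G$, and $\partial_tB_r(x)=\{y\in G:\tilde d(y,\partial\tilde B_r(x))\le t\}$. A metric space is voidless if for all $x$ and $r>0$, every closed ball meeting both $\{y:d(x,y)<r\}$ and $\{y:d(x,y)>r\}$ also meets $\{y:d(x,y)=r\}$. $\sigma B=\{\sigma g:g\in B\}$. *)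

theory Defs
  imports Complex_Main "HOL-Algebra.Group"
begin

definition metric_on :: "'a set \<Rightarrow> ('a \<Rightarrow> 'a \<Rightarrow> real) \<Rightarrow> bool" where
  "metric_on S d \<longleftrightarrow>
     (\<forall>x\<in>S. \<forall>y\<in>S. 0 \<le> d x y \<and> (d x y = 0 \<longleftrightarrow> x = y) \<and> d x y = d y x) \<and>
     (\<forall>x\<in>S. \<forall>y\<in>S. \<forall>z\<in>S. d x z \<le> d x y + d y z)"

definition right_invariant_metric :: "('a, 'b) monoid_scheme \<Rightarrow> ('a \<Rightarrow> 'a \<Rightarrow> real) \<Rightarrow> bool" where
  "right_invariant_metric G d \<longleftrightarrow> metric_on (carrier G) d \<and>
     (\<forall>x\<in>carrier G. \<forall>y\<in>carrier G. \<forall>g\<in>carrier G. d (x \<otimes>\<^bsub>G\<^esub> g) (y \<otimes>\<^bsub>G\<^esub> g) = d x y)"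

definition cball_in :: "'a set \<Rightarrow> ('a \<Rightarrow> 'a \<Rightarrow> real) \<Rightarrow> 'a \<Rightarrow> real \<Rightarrow> 'a set" where
  "cball_in S d x r = {y \<in> S. d x y \<le> r}"

definition sphere_in :: "'a set \<Rightarrow> ('a \<Rightarrow> 'a \<Rightarrow> real) \<Rightarrow> 'a \<Rightarrow> real \<Rightarrow> 'a set" where
  "sphere_in S d x r = {y \<in> S. d x y = r}"

definition voidless :: "'a set \<Rightarrow> ('a \<Rightarrow> 'a \<Rightarrow> real) \<Rightarrow> bool" where
  "voidless S d \<longleftrightarrow>
     (\<forall>x\<in>S. \<forall>r>0. \<forall>z\<in>S. \<forall>s.
        (cball_in S d z s \<inter> {y \<in> S. d x y < r} \<noteq> {}) \<and>
        (cball_in S d z s \<inter> {y \<in> S. d x y > r} \<noteq> {}) \<longrightarrow>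
        cball_in S d z s \<inter> {y \<in> S. d x y = r} \<noteq> {})"

text \<open>Distance from a point to a set (infimum); a point is within distance t of the
  empty set never (distance to the empty set is taken to be infinite).\<close>
definition within_setdist :: "('a \<Rightarrow> 'a \<Rightarrow> real) \<Rightarrow> 'a \<Rightarrow> 'a set \<Rightarrow> real \<Rightarrow> bool" where
  "within_setdist d y A t \<longleftrightarrow> A \<noteq> {} \<and> (INF a\<in>A. d y a) \<le> t"

definition boundary_nbhd ::
  "'a set \<Rightarrow> 'a set \<Rightarrow> ('a \<Rightarrow> 'a \<Rightarrow> real) \<Rightarrow> real \<Rightarrow> 'a \<Rightarrow> real \<Rightarrow> 'a set" where
  "boundary_nbhd H Ht dt t x r = {y \<in> H. within_setdist dt y (sphere_in Ht dt x r) t}"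

definition left_translate :: "('a, 'b) monoid_scheme \<Rightarrow> 'a \<Rightarrow> 'a set \<Rightarrow> 'a set" where
  "left_translate G \<sigma> B = (\<lambda>g. \<sigma> \<otimes>\<^bsub>G\<^esub> g) ` B"

end

theory Submission
  imports Defs
begin

text \<open>A point y of B \<triangle> \<sigma>B and its partner \<sigma>\<inverse>y lie on opposite sides of the sphere of
  radius r, and by right invariance they are exactly t = d(\<sigma>, e) apart. So the closed t-ball
  about y in the extension meets both the inside and the outside of that sphere, and
  voidlessness puts a point of the sphere within t of y.\<close>

lemma metric_on_dist_self:
  assumes "metric_on S d" "y \<in> S"
  shows "d y y = 0"
  using assms by (simp add: metric_on_def)

lemma voidless_within_setdist_sphere:
  assumes met: "metric_on S d" and vl: "voidless S d"
    and S: "x \<in> S" "y \<in> S" "p \<in> S" "q \<in> S"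
    and near: "d y p \<le> t" "d y q \<le> t"
    and sides: "d x p \<le> r" "r < d x q"
  shows "within_setdist d y (sphere_in S d x r) t"
proof -
  have nonneg: "\<And>a b. a \<in> S \<Longrightarrow> b \<in> S \<Longrightarrow> 0 \<le> d a b"
    using met by (simp add: metric_on_def)
  obtain z where z: "z \<in> sphere_in S d x r" and yz: "d y z \<le> t"
  proof (cases "d x p = r")
    case True
    then show ?thesis using that[of p] S near by (auto simp: sphere_in_def)
  next
    case False
    with sides have "d x p < r" by simp
    with nonneg[of x p] S have "r > 0" by simp
    moreover have "cball_in S d y t \<inter> {w \<in> S. d x w < r} \<noteq> {}"
      using S near \<open>d x p < r\<close> by (auto simp: cball_in_def)
    moreover have "cball_in S d y t \<inter> {w \<in> S. d x w > r} \<noteq> {}"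
      using S near sides by (auto simp: cball_in_def)
    ultimately have "cball_in S d y t \<inter> {w \<in> S. d x w = r} \<noteq> {}"
      using vl S unfolding voidless_def by blast
    then show ?thesis using that by (auto simp: cball_in_def sphere_in_def)
  qed
  have "bdd_below ((\<lambda>a. d y a) ` sphere_in S d x r)"
    by (rule bdd_belowI[where m=0]) (auto simp: sphere_in_def intro: nonneg S)
  then have "(INF a\<in>sphere_in S d x r. d y a) \<le> d y z"
    using z by (rule cINF_lower)
  with yz z show ?thesis by (auto simp: within_setdist_def)
qed

lemma (in group) right_invariant_dist_left_mult:
  assumes "right_invariant_metric G d" "\<sigma> \<in> carrier G" "g \<in> carrier G"
  shows "d (\<sigma> \<otimes> g) g = d \<sigma> \<one>"
  using assms by (metis right_invariant_metric_def l_one one_closed)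

lemma (in group) right_invariant_dist_inv:
  assumes ri: "right_invariant_metric G d" and \<sigma>: "\<sigma> \<in> carrier G"
  shows "d \<one> (inv \<sigma>) = d \<sigma> \<one>"
  using ri[unfolded right_invariant_metric_def] \<sigma>
  by (metis inv_closed l_inv l_one one_closed)

lemma (in group) right_invariant_dist_left_mult_inv:
  assumes ri: "right_invariant_metric G d" and \<sigma>: "\<sigma> \<in> carrier G" and y: "y \<in> carrier G"
  shows "d y (inv \<sigma> \<otimes> y) = d \<sigma> \<one>"
proof -
  have inv_y: "\<And>a b. a \<in> carrier G \<Longrightarrow> b \<in> carrier G \<Longrightarrow> d (a \<otimes> inv y) (b \<otimes> inv y) = d a b"
    using ri y by (simp add: right_invariant_metric_def)
  have "d y (inv \<sigma> \<otimes> y) = d (y \<otimes> inv y) (inv \<sigma> \<otimes> y \<otimes> inv y)"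
    using inv_y[of y "inv \<sigma> \<otimes> y"] \<sigma> y by simp
  also have "\<dots> = d \<one> (inv \<sigma>)"
    using \<sigma> y by (simp add: m_assoc)
  finally show ?thesis
    using right_invariant_dist_inv[OF ri \<sigma>] by simp
qed

lemma (in group) translate_sym_diff_witnesses:
  assumes ri: "right_invariant_metric G d" and H: "subgroup H G"
    and \<sigma>: "\<sigma> \<in> H"
    and y: "y \<in> (cball_in H d x r - left_translate G \<sigma> (cball_in H d x r))
               \<union> (left_translate G \<sigma> (cball_in H d x r) - cball_in H d x r)"
  obtains p q where "p \<in> H" "q \<in> H" "y \<in> H" "d y p \<le> d \<sigma> \<one>" "d y q \<le> d \<sigma> \<one>"
    "d x p \<le> r" "r < d x q"
proof -
  interpret H: subgroup H G by (fact H)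
  have met: "metric_on (carrier G) d" using ri by (simp add: right_invariant_metric_def)
  have t_nonneg: "0 \<le> d \<sigma> \<one>"
    using met \<sigma> by (simp add: metric_on_def)
  from y consider
      (out) "y \<in> H" "d x y \<le> r" "y \<notin> left_translate G \<sigma> (cball_in H d x r)"
    | (inn) g where "g \<in> H" "d x g \<le> r" "y = \<sigma> \<otimes> g" "\<not> (y \<in> H \<and> d x y \<le> r)"
    by (auto simp: cball_in_def left_translate_def)
  then show thesis
  proof cases
    case out
    let ?q = "inv \<sigma> \<otimes> y"
    have yG: "y \<in> carrier G" using out(1) H.mem_carrier by blast
    have qH: "?q \<in> H" using out(1) \<sigma> by simp
    have "\<sigma> \<otimes> ?q = y" using yG \<sigma> by (simp add: m_assoc[symmetric])
    then have "?q \<notin> cball_in H d x r"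
      using out(3) unfolding left_translate_def by force
    then have "r < d x ?q" using qH by (simp add: cball_in_def)
    moreover have "d y ?q = d \<sigma> \<one>"
      using right_invariant_dist_left_mult_inv[OF ri H.mem_carrier[OF \<sigma>] yG] .
    moreover have "d y y = 0" using metric_on_dist_self[OF met yG] .
    ultimately show thesis
      using that[OF out(1) qH out(1)] out(2) t_nonneg by simp
  next
    case inn
    have yH: "y \<in> H" using inn(1,3) \<sigma> by simp
    with inn(4) have "r < d x y" by simp
    moreover have "d y g = d \<sigma> \<one>"
      unfolding inn(3) using right_invariant_dist_left_mult[OF ri] \<sigma> inn(1) H.mem_carrier by blast
    moreover have "d y y = 0" using metric_on_dist_self[OF met H.mem_carrier[OF yH]] .
    ultimately show thesis
      using that[OF inn(1) yH yH] inn(2) t_nonneg by simp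
  qed
qed

theorem lemma4:
  fixes Gt :: "('a, 'b) monoid_scheme" and H :: "'a set"
    and d dt :: "'a \<Rightarrow> 'a \<Rightarrow> real"
  assumes "group Gt"
    and "subgroup H Gt"
    and "metric_on H d"
    and "\<forall>x\<in>H. \<forall>y\<in>H. \<forall>g\<in>H. d (x \<otimes>\<^bsub>Gt\<^esub> g) (y \<otimes>\<^bsub>Gt\<^esub> g) = d x y"
    and "right_invariant_metric Gt dt"
    and "\<forall>x\<in>H. \<forall>y\<in>H. dt x y = d x y"
    and "voidless (carrier Gt) dt"
    and "x \<in> H" and "\<sigma> \<in> H"
  shows "let B = cball_in H d x r in
         (B - left_translate Gt \<sigma> B) \<union> (left_translate Gt \<sigma> B - B)
           \<subseteq> boundary_nbhd H (carrier Gt) dt (d \<sigma> \<one>\<^bsub>Gt\<^esub>) x r"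
proof -
  interpret group Gt by fact
  interpret H: subgroup H Gt by fact
  have ball_eq: "cball_in H d x r = cball_in H dt x r"
    using assms(6,8) by (auto simp: cball_in_def)
  have t_eq: "d \<sigma> \<one>\<^bsub>Gt\<^esub> = dt \<sigma> \<one>\<^bsub>Gt\<^esub>"
    using assms(6,9) by simp
  have met: "metric_on (carrier Gt) dt"
    using assms(5) by (simp add: right_invariant_metric_def)
  show ?thesis
    unfolding Let_def ball_eq t_eq
  proof
    fix y assume "y \<in> (cball_in H dt x r - left_translate Gt \<sigma> (cball_in H dt x r))
        \<union> (left_translate Gt \<sigma> (cball_in H dt x r) - cball_in H dt x r)"
    then obtain p q where pq: "p \<in> H" "q \<in> H" and "y \<in> H"
      and near: "dt y p \<le> dt \<sigma> \<one>\<^bsub>Gt\<^esub>" "dt y q \<le> dt \<sigma> \<one>\<^bsub>Gt\<^esub>"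
      and sides: "dt x p \<le> r" "r < dt x q"
      by (rule translate_sym_diff_witnesses[OF assms(5,2,9)])
    have "within_setdist dt y (sphere_in (carrier Gt) dt x r) (dt \<sigma> \<one>\<^bsub>Gt\<^esub>)"
      using voidless_within_setdist_sphere[OF met assms(7) _ _ _ _ near sides]
        assms(8) \<open>y \<in> H\<close> pq H.subset by blast
    with \<open>y \<in> H\<close> show "y \<in> boundary_nbhd H (carrier Gt) dt (dt \<sigma> \<one>\<^bsub>Gt\<^esub>) x r"
      by (simp add: boundary_nbhd_def)
  qed
qed

end
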